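(* Let $\beta>0$ be the solution of $e^{1/\beta}=2+1/\beta$ (so $\beta\approx0.872453$) and let $\rho_1=e^{-1/\beta}\approx0.317844$. Let $\pi$ be any ordering of $[n]$ and let $p>0$ be a price such that $\mathbb{E}_{\mathbf v\sim\mathcal F}\big[\sum_{i\in[n]}y_i(\mathbf v,p,\pi)\big]=\rho_1$. Then \[ \mathbb{E}_{\mathbf v\sim\mathcal F}[\mathrm{SW}(\mathbf v,p,\pi)]\ \ge\ \rho_1\,\mathbb{E}_{\mathbf v\sim\mathcal F}[\mathrm{SW}^*(\mathbf v)]. \]
   Context: There are $n$ agents, identified with $[n]=\{1,\dots,n\}$, and one perfectly divisible item of size $1$. Each agent $i$ has a valuation function $v_i:[0,1]\to\mathbb{R}_{\ge0}$ that is non-decreasing and concave; $v_i$ is drawn from a publicly known distribution $\mathcal F_i$ over such functions, independently across agents, and $\mathbf v=(v_1,\dots,v_n)\sim\mathcal F=\mathcal F_1\times\cdots\times\mathcal F_n$. All expectations are assumed finite. Sequential posted pricing with linear pricing uses a price $p>0$ per unit and an ordering $\pi$ (a permutation of $[n]$): agents act in the order $\pi$; when agent $i$ acts she may buy any fraction of the still-unallocated part of the item, paying $p$ per unit, with utility $v_i(z)-pz$ for fraction $z$. $y^*_i(v_i,p)\in[0,1]$ denotes a maximizer of $z\mapsto v_i(z)-pz$ over $[0,1]$ (fixed measurable selection). With $B_\pi(i)$ the set of agents acting before $i$ in $\pi$, agent $i$ buys $y_i(\mathbf v,p,\pi)=\min\{y^*_i(v_i,p),\max\{0,1-\sum_{j\in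 B_\pi(i)}y^*_j(v_j,p)\}\}$. The welfare of the mechanism is $\mathrm{SW}(\mathbf v,p,\pi)=\sum_{i}v_i(y_i(\mathbf v,p,\pi))$. $x(\mathbf v)$ denotes a welfare-maximizing allocation ($x_i(\mathbf v)\ge0$, $\sum_i x_i(\mathbf v)=1$, maximizing $\sum_i v_i(x_i)$), and $\mathrm{SW}^*(\mathbf v)=\sum_i v_i(x_i(\mathbf v))$. *)

theory Defs
  imports "HOL-Probability.Probability"
begin

text \<open>Agents are indexed by 0,...,n-1. A valuation is a function on [0,1]
  (represented as real => real; only its values on [0,1] matter) that is
  non-negative, non-decreasing and concave on [0,1].\<close>

definition valuation :: "(real \<Rightarrow> real) \<Rightarrow> bool" where
  "valuation v \<longleftrightarrow> mono_on {0..1} v \<and> concave_on {0..1} v \<and> (\<forall>z\<in>{0..1}. 0 \<le> v z)"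

text \<open>An ordering is given by pos :: nat => nat, a bijection of {..<n}, where
  pos i is the position at which agent i acts. Agents acting before i:\<close>

definition before :: "nat \<Rightarrow> (nat \<Rightarrow> nat) \<Rightarrow> nat \<Rightarrow> nat set" where
  "before n pos i = {j \<in> {..<n}. pos j < pos i}"

text \<open>ystar i v p : the fixed selection of a maximizer of z -> v z - p z over [0,1].
  Amount bought by agent i under price p, ordering pos, profile vs:\<close>

definition ybuy :: "nat \<Rightarrow> (nat \<Rightarrow> (real \<Rightarrow> real) \<Rightarrow> real \<Rightarrow> real) \<Rightarrow> (nat \<Rightarrow> nat)
    \<Rightarrow> (nat \<Rightarrow> real \<Rightarrow> real) \<Rightarrow> real \<Rightarrow> nat \<Rightarrow> real" where
  "ybuy n ystar pos vs p i =
     min (ystar i (vs i) p) (max 0 (1 - (\<Sum>j\<in>before n pos i. ystar j (vs j) p)))"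

definition SW :: "nat \<Rightarrow> (nat \<Rightarrow> (real \<Rightarrow> real) \<Rightarrow> real \<Rightarrow> real) \<Rightarrow> (nat \<Rightarrow> nat)
    \<Rightarrow> (nat \<Rightarrow> real \<Rightarrow> real) \<Rightarrow> real \<Rightarrow> real" where
  "SW n ystar pos vs p = (\<Sum>i<n. vs i (ybuy n ystar pos vs p i))"

definition allocation :: "nat \<Rightarrow> (nat \<Rightarrow> real) \<Rightarrow> bool" where
  "allocation n x \<longleftrightarrow> (\<forall>i<n. 0 \<le> x i) \<and> (\<Sum>i<n. x i) = 1"

text \<open>Optimal welfare SW*(v): the maximum (written as supremum, which equals the
  maximum whenever a welfare-maximizing allocation exists) of the welfare over allocations.\<close>

definition SWopt :: "nat \<Rightarrow> (nat \<Rightarrow> real \<Rightarrow> real) \<Rightarrow> real" where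
  "SWopt n vs = (SUP x\<in>{x. allocation n x}. (\<Sum>i<n. vs i (x i)))"

end

theory Submission
  imports Defs
begin

text \<open>Write \<open>u\<^sub>i = max\<^sub>z (v\<^sub>i z - p z)\<close> for the utility of agent \<open>i\<close> at price \<open>p\<close>, and
  \<open>r\<^sub>i\<close> for the supply left when \<open>i\<close> arrives. By concavity agent \<open>i\<close> gets value at least
  \<open>p y\<^sub>i + r\<^sub>i u\<^sub>i\<close>, so \<open>SW \<ge> p\<cdot>(sold) + \<Sigma> r\<^sub>i u\<^sub>i\<close>, while \<open>v\<^sub>i z \<le> p z + u\<^sub>i\<close> gives
  \<open>SW* \<le> p + \<Sigma> u\<^sub>i\<close>. Since \<open>r\<^sub>i\<close> depends only on the agents before \<open>i\<close>, it is independent of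
  \<open>u\<^sub>i\<close>, and \<open>r\<^sub>i \<ge> 1 - (sold)\<close> gives \<open>E r\<^sub>i \<ge> 1 - \<rho>\<close> when \<open>\<rho>\<close> units are sold in expectation.
  Hence \<open>E SW \<ge> p\<rho> + (1 - \<rho>) X \<ge> \<rho> (p + X) \<ge> \<rho> E SW*\<close> with \<open>X = \<Sigma> E u\<^sub>i\<close>, as soon as
  \<open>\<rho> \<le> 1/2\<close>; and \<open>e\<^bsup>-1/\<beta>\<^esup> \<le> 1/2\<close> because \<open>e\<^bsup>1/\<beta>\<^esup> = 2 + 1/\<beta> \<ge> 2\<close>.\<close>

definition max_utility :: "real \<Rightarrow> (real \<Rightarrow> real) \<Rightarrow> real" where
  "max_utility p v = (SUP q\<in>\<rat> \<inter> {0..1}. min (v q - p * q) (v 1))"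

text \<open>The supremum runs over the rationals so that it is measurable in \<open>v\<close>; the cap at \<open>v 1\<close>
  keeps it bounded for arbitrary \<open>v\<close>.\<close>

lemma Rats_Icc_01_nonempty: "\<rat> \<inter> {0..1::real} \<noteq> {}"
  using Rats_0 by fastforce

lemma bdd_above_max_utility: "bdd_above ((\<lambda>q. min (v q - p * q) (v 1)) ` (\<rat> \<inter> {0..1}))"
  by (rule bdd_aboveI2[where M="v 1"]) (simp add: min_def)

lemma max_utility_least:
  assumes "\<And>z. z \<in> {0..1} \<Longrightarrow> v z - p * z \<le> c"
  shows "max_utility p v \<le> c"
  unfolding max_utility_def
  by (rule cSUP_least[OF Rats_Icc_01_nonempty]) (use assms in \<open>auto intro: min.coboundedI1\<close>)

lemma max_utility_le_value_one: "max_utility p v \<le> v 1"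
  unfolding max_utility_def by (rule cSUP_least[OF Rats_Icc_01_nonempty]) simp

lemma utility_le_max_utility:
  assumes mono: "mono_on {0..1} v" and p: "p > 0" and x: "x \<in> {0..1}"
  shows "v x - p * x \<le> max_utility p v"
proof (rule ccontr)
  assume "\<not> v x - p * x \<le> max_utility p v"
  then have e: "(v x - p * x - max_utility p v) / p > 0" (is "?e > 0") using p by simp
  obtain q where q: "q \<in> \<rat>" "x \<le> q" "q \<le> 1" "q < x + ?e"
  proof (cases "x = 1")
    case True then show ?thesis using that[of 1] e by auto
  next
    case False
    then have "x < min 1 (x + ?e)" using x e by auto
    then obtain q where "q \<in> \<rat>" "x < q" "q < min 1 (x + ?e)"
      using Rats_dense_in_real by blast
    then show ?thesis using that[of q] by auto
  qed
  have q01: "q \<in> {0..1}" using q x by auto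
  have "v x \<le> v q" "v q \<le> v 1" using mono q01 x q by (auto intro: mono_onD)
  have "v x - p * x - p * ?e < v q - p * q"
    using \<open>v x \<le> v q\<close> mult_strict_left_mono[OF q(4) p] by (simp add: algebra_simps)
  also have "\<dots> = min (v q - p * q) (v 1)"
  proof -
    have "0 \<le> p * q" using p q01 by simp
    then show ?thesis using \<open>v q \<le> v 1\<close> by (simp add: min_def)
  qed
  also have "\<dots> \<le> max_utility p v"
    unfolding max_utility_def by (rule cSUP_upper[OF _ bdd_above_max_utility]) (use q q01 in auto)
  finally show False using p by simp
qed

lemma max_utility_nonneg:
  assumes "valuation v" "p > 0"
  shows "0 \<le> max_utility p v"
proof -
  have "mono_on {0..1} v" "0 \<le> v 0" using assms(1) unfolding valuation_def by auto
  then show ?thesis using utility_le_max_utility[of v p 0] assms(2) by simp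
qed

lemma borel_measurable_max_utility [measurable]:
  assumes [measurable]: "\<And>z. (\<lambda>v. v z) \<in> borel_measurable M"
  shows "max_utility p \<in> borel_measurable M"
  unfolding max_utility_def[abs_def]
  by (rule borel_measurable_cSUP) (auto intro: countable_rat bdd_above_max_utility)

lemma value_of_truncated_demand_ge:
  assumes val: "valuation v" and y: "y \<in> {0..1}"
    and max: "\<forall>z\<in>{0..1}. v z - p * z \<le> v y - p * y" and r: "r \<in> {0..1}"
  shows "p * min y r + r * (v y - p * y) \<le> v (min y r)"
proof -
  have conc: "concave_on {0..1} v" and v0: "0 \<le> v 0"
    using val unfolding valuation_def by auto
  have U: "0 \<le> v y - p * y" using max v0 by force
  show ?thesis
  proof (cases "y \<le> r")
    case True
    moreover have "r * (v y - p * y) \<le> v y - p * y" using r U by (simp add: mult_left_le_one_le)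
    ultimately show ?thesis by simp
  next
    case False
    define t where "t = r / y"
    have ypos: "y > 0" using False r by auto
    have t: "0 \<le> t" "t \<le> 1" and rt: "r = t * y" using False r ypos by (auto simp: t_def)
    have "(1 - t) * v 0 + t * v y \<le> v ((1 - t) *\<^sub>R 0 + t *\<^sub>R y)"
      by (rule concave_onD[OF conc t]) (use y in auto)
    then have "(1 - t) * v 0 + t * v y \<le> v r" by (simp add: rt)
    moreover have "0 \<le> (1 - t) * v 0" using t v0 by simp
    ultimately have "t * v y \<le> v r" by linarith
    moreover have "r * (v y - p * y) \<le> t * (v y - p * y)"
      using U t y rt by (intro mult_right_mono) (auto intro: mult_left_le)
    ultimately show ?thesis using False rt by (simp add: algebra_simps)
  qed
qed

definition demand_before :: "nat \<Rightarrow> (nat \<Rightarrow> (real \<Rightarrow> real) \<Rightarrow> real \<Rightarrow> real) \<Rightarrow> (nat \<Rightarrow> nat)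
    \<Rightarrow> (nat \<Rightarrow> real \<Rightarrow> real) \<Rightarrow> real \<Rightarrow> nat \<Rightarrow> real" where
  "demand_before n ystar pos vs p i = (\<Sum>j\<in>before n pos i. ystar j (vs j) p)"

lemma ybuy_demand_before:
  "ybuy n ystar pos vs p i = min (ystar i (vs i) p) (max 0 (1 - demand_before n ystar pos vs p i))"
  by (simp add: ybuy_def demand_before_def)

lemma finite_before [simp]: "finite (before n pos i)"
  by (simp add: before_def)

lemma before_subset: "before n pos i \<subseteq> {..<n}"
  by (auto simp: before_def)

lemma not_in_before [simp]: "i \<notin> before n pos i"
  by (simp add: before_def)

lemma sum_ybuy_before_eq_demand_before:
  assumes "\<And>j. j \<in> before n pos k \<Longrightarrow> demand_before n ystar pos vs p j + ystar j (vs j) p \<le> 1"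
  shows "(\<Sum>j\<in>before n pos k. ybuy n ystar pos vs p j) = demand_before n ystar pos vs p k"
proof -
  have "ybuy n ystar pos vs p j = ystar j (vs j) p" if "j \<in> before n pos k" for j
    unfolding ybuy_demand_before using assms[OF that] by (intro min_absorb1 max.coboundedI2) linarith
  then show ?thesis by (simp add: demand_before_def[of n ystar pos vs p k])
qed

context
  fixes n :: nat and ystar :: "nat \<Rightarrow> (real \<Rightarrow> real) \<Rightarrow> real \<Rightarrow> real"
    and pos :: "nat \<Rightarrow> nat" and vs :: "nat \<Rightarrow> real \<Rightarrow> real" and p :: real
  assumes demand_nonneg: "\<And>j. j < n \<Longrightarrow> 0 \<le> ystar j (vs j) p"
begin

lemma demand_before_nonneg: "0 \<le> demand_before n ystar pos vs p i"
  unfolding demand_before_def using before_subset demand_nonneg by (force intro: sum_nonneg)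

lemma ybuy_nonneg: "j < n \<Longrightarrow> 0 \<le> ybuy n ystar pos vs p j"
  using demand_nonneg by (simp add: ybuy_demand_before)

lemma sum_ybuy_mono: "A \<subseteq> {..<n} \<Longrightarrow> (\<Sum>j\<in>A. ybuy n ystar pos vs p j) \<le> (\<Sum>j<n. ybuy n ystar pos vs p j)"
  using ybuy_nonneg by (intro sum_mono2) auto

lemma demand_before_add_le:
  assumes "j \<in> before n pos k"
  shows "demand_before n ystar pos vs p j + ystar j (vs j) p \<le> demand_before n ystar pos vs p k"
proof -
  have "insert j (before n pos j) \<subseteq> before n pos k"
    using assms by (auto simp: before_def)
  then have "(\<Sum>l\<in>insert j (before n pos j). ystar l (vs l) p) \<le> demand_before n ystar pos vs p k"
    unfolding demand_before_def using before_subset demand_nonneg by (intro sum_mono2) force+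
  then show ?thesis by (simp add: demand_before_def)
qed

text \<open>The first agent in the ordering whose demand exhausts the item receives everything that is left.\<close>

lemma sum_ybuy_eq_one_if_exhausted:
  assumes i: "i < n" and exhausted: "1 \<le> demand_before n ystar pos vs p i + ystar i (vs i) p"
  shows "1 \<le> (\<Sum>j<n. ybuy n ystar pos vs p j)"
proof -
  let ?d = "demand_before n ystar pos vs p" and ?y = "\<lambda>j. ystar j (vs j) p"
  define A where "A = {j. j < n \<and> 1 \<le> ?d j + ?y j}"
  obtain k where k: "k \<in> A" and first: "\<And>j. j \<in> A \<Longrightarrow> pos k \<le> pos j"
    using ex_has_least_nat[of "\<lambda>j. j \<in> A" i pos] i exhausted by (auto simp: A_def)
  have "?d j + ?y j \<le> 1" if "j \<in> before n pos k" for j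
    using that first[of j] by (force simp: A_def before_def)
  then have before_k: "(\<Sum>j\<in>before n pos k. ybuy n ystar pos vs p j) = ?d k"
    by (rule sum_ybuy_before_eq_demand_before)
  show ?thesis
  proof (cases "1 \<le> ?d k")
    case True
    then show ?thesis using before_k sum_ybuy_mono[OF before_subset[of n pos k]] by simp
  next
    case False
    then have "ybuy n ystar pos vs p k = 1 - ?d k"
      using k by (simp add: ybuy_demand_before A_def)
    moreover have "insert k (before n pos k) \<subseteq> {..<n}"
      using k before_subset by (auto simp: A_def)
    ultimately show ?thesis
      using sum_ybuy_mono[of "insert k (before n pos k)"] before_k by simp
  qed
qed

lemma unsold_le_undemanded_before:
  assumes i: "i < n"
  shows "1 - (\<Sum>j<n. ybuy n ystar pos vs p j) \<le> max 0 (1 - demand_before n ystar pos vs p i)"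
proof (cases "demand_before n ystar pos vs p i < 1")
  case True
  have "(\<Sum>j\<in>before n pos i. ybuy n ystar pos vs p j) = demand_before n ystar pos vs p i"
    using True demand_before_add_le by (intro sum_ybuy_before_eq_demand_before) force
  then show ?thesis using sum_ybuy_mono[OF before_subset[of n pos i]] by linarith
next
  case False
  then show ?thesis
    using sum_ybuy_eq_one_if_exhausted[OF i] demand_nonneg[OF i] by simp
qed

end

text \<open>The supply left for agent \<open>i\<close>; clamping at \<open>1\<close> makes it bounded for every profile, not
  only for those whose demands are non-negative.\<close>

definition supply_left :: "nat \<Rightarrow> (nat \<Rightarrow> (real \<Rightarrow> real) \<Rightarrow> real \<Rightarrow> real) \<Rightarrow> (nat \<Rightarrow> nat)
    \<Rightarrow> real \<Rightarrow> nat \<Rightarrow> (nat \<Rightarrow> real \<Rightarrow> real) \<Rightarrow> real" where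
  "supply_left n ystar pos p i vs = min 1 (max 0 (1 - demand_before n ystar pos vs p i))"

lemma allocation_in_unit_interval:
  assumes "allocation n x" "i < n"
  shows "x i \<in> {0..1}"
proof -
  have "x i \<le> (\<Sum>j<n. x j)" using assms by (intro member_le_sum) (auto simp: allocation_def)
  then show ?thesis using assms by (simp add: allocation_def)
qed

lemma allocation_unit: "i < n \<Longrightarrow> allocation n (\<lambda>j. if j = i then 1 else 0)"
  by (simp add: allocation_def)

locale best_response_profile =
  fixes n :: nat and ystar :: "nat \<Rightarrow> (real \<Rightarrow> real) \<Rightarrow> real \<Rightarrow> real"
    and p :: real and vs :: "nat \<Rightarrow> real \<Rightarrow> real"
  assumes valuation: "\<And>i. i < n \<Longrightarrow> valuation (vs i)"
    and demand_01: "\<And>i. i < n \<Longrightarrow> ystar i (vs i) p \<in> {0..1}"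
    and demand_max: "\<And>i. i < n \<Longrightarrow>
          \<forall>z\<in>{0..1}. vs i z - p * z \<le> vs i (ystar i (vs i) p) - p * ystar i (vs i) p"
    and price_pos: "p > 0"
begin

lemma demand_nonneg: "i < n \<Longrightarrow> 0 \<le> ystar i (vs i) p"
  using demand_01 by simp

lemma value_mono: "i < n \<Longrightarrow> mono_on {0..1} (vs i)"
  using valuation by (simp add: valuation_def)

lemma sold_nonneg: "0 \<le> (\<Sum>j<n. ybuy n ystar pos vs p j)"
  using ybuy_nonneg[of n ystar vs p, OF demand_nonneg] by (intro sum_nonneg) auto

lemma supply_left_eq: "supply_left n ystar pos p i vs = max 0 (1 - demand_before n ystar pos vs p i)"
  using demand_before_nonneg[of n ystar vs p, OF demand_nonneg] by (simp add: supply_left_def)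

lemma unsold_le_supply_left:
  "i < n \<Longrightarrow> 1 - (\<Sum>j<n. ybuy n ystar pos vs p j) \<le> supply_left n ystar pos p i vs"
  unfolding supply_left_eq by (rule unsold_le_undemanded_before[of n ystar vs p, OF demand_nonneg])

lemma max_utility_nonneg: "i < n \<Longrightarrow> 0 \<le> max_utility p (vs i)"
  using max_utility_nonneg valuation price_pos by blast

lemma SW_ge:
  "p * (\<Sum>j<n. ybuy n ystar pos vs p j) + (\<Sum>i<n. supply_left n ystar pos p i vs * max_utility p (vs i))
     \<le> SW n ystar pos vs p"
proof -
  have "p * ybuy n ystar pos vs p i + supply_left n ystar pos p i vs * max_utility p (vs i)
        \<le> vs i (ybuy n ystar pos vs p i)" if i: "i < n" for i
  proof -
    let ?y = "ystar i (vs i) p" and ?r = "supply_left n ystar pos p i vs"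
    have r: "?r \<in> {0..1}" by (simp add: supply_left_def)
    have "max_utility p (vs i) \<le> vs i ?y - p * ?y"
      using demand_max[OF i] by (intro max_utility_least) auto
    then have "?r * max_utility p (vs i) \<le> ?r * (vs i ?y - p * ?y)"
      using r by (intro mult_left_mono) auto
    moreover have "ybuy n ystar pos vs p i = min ?y ?r"
      by (simp add: supply_left_eq ybuy_demand_before)
    ultimately show ?thesis
      using value_of_truncated_demand_ge[OF valuation[OF i] demand_01[OF i] demand_max[OF i] r] by simp
  qed
  then show ?thesis
    unfolding SW_def sum_distrib_left sum.distrib[symmetric] by (intro sum_mono) auto
qed

lemma SWopt_le:
  assumes "0 < n"
  shows "SWopt n vs \<le> p + (\<Sum>i<n. max_utility p (vs i))"
  unfolding SWopt_def
proof (rule cSUP_least)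
  show "{x. allocation n x} \<noteq> {}" using allocation_unit[OF assms] by blast
next
  fix x assume "x \<in> {x. allocation n x}"
  then have x: "allocation n x" by simp
  have "vs i (x i) \<le> p * x i + max_utility p (vs i)" if i: "i < n" for i
    using utility_le_max_utility[OF value_mono[OF i] price_pos allocation_in_unit_interval[OF x i]]
    by linarith
  then have "(\<Sum>i<n. vs i (x i)) \<le> (\<Sum>i<n. p * x i + max_utility p (vs i))" by (intro sum_mono) auto
  also have "\<dots> = p + (\<Sum>i<n. max_utility p (vs i))"
    using x by (simp add: sum.distrib flip: sum_distrib_left add: allocation_def)
  finally show "(\<Sum>i<n. vs i (x i)) \<le> p + (\<Sum>i<n. max_utility p (vs i))" .
qed

lemma max_utility_le_SWopt:
  assumes i: "i < n"
  shows "max_utility p (vs i) \<le> SWopt n vs"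
proof -
  define e where "e j = (if j = i then 1 else (0::real))" for j
  have bdd: "bdd_above ((\<lambda>x. \<Sum>j<n. vs j (x j)) ` {x. allocation n x})"
  proof (rule bdd_aboveI2)
    fix x assume "x \<in> {x. allocation n x}"
    then have "vs j (x j) \<le> vs j 1" if "j < n" for j
      using mono_onD[OF value_mono[OF that]] allocation_in_unit_interval[OF _ that] by simp
    then show "(\<Sum>j<n. vs j (x j)) \<le> (\<Sum>j<n. vs j 1)" by (intro sum_mono) simp
  qed
  have "max_utility p (vs i) \<le> vs i (e i)" by (simp add: e_def max_utility_le_value_one)
  also have "\<dots> \<le> (\<Sum>j<n. vs j (e j))"
    using i valuation by (intro member_le_sum) (auto simp: valuation_def e_def)
  also have "\<dots> \<le> SWopt n vs"
    unfolding SWopt_def by (rule cSUP_upper[OF _ bdd]) (use allocation_unit[OF i] in \<open>simp add: e_def\<close>)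
  finally show ?thesis .
qed

end

lemma indep_var_PiM_disjoint_coordinates:
  assumes prob: "\<And>i. i \<in> I \<Longrightarrow> prob_space (M i)" and "I \<noteq> {}"
    and AB: "A \<subseteq> I" "B \<subseteq> I" "A \<inter> B = {}"
    and f: "f \<in> borel_measurable (PiM A M)" and g: "g \<in> borel_measurable (PiM B M)"
  shows "prob_space.indep_var (PiM I M) borel (\<lambda>\<omega>. f (restrict \<omega> A)) borel (\<lambda>\<omega>. g (restrict \<omega> B))"
proof -
  interpret P: prob_space "PiM I M" by (rule prob_space_PiM[OF prob])
  have "distr (PiM I M) (PiM I M) (\<lambda>\<omega>. \<lambda>i\<in>I. \<omega> i) = distr (PiM I M) (PiM I M) (\<lambda>\<omega>. \<omega>)"
    by (rule distr_cong) (auto simp: space_PiM)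
  also have "\<dots> = PiM I (\<lambda>i. distr (PiM I M) (M i) (\<lambda>\<omega>. \<omega> i))"
    by (simp add: distr_PiM_component prob cong: PiM_cong)
  finally have "P.indep_vars M (\<lambda>i \<omega>. \<omega> i) I"
    by (subst P.indep_vars_iff_distr_eq_PiM'[OF \<open>I \<noteq> {}\<close>]) auto
  from P.indep_var_compose[OF P.indep_var_restrict[OF this AB(3,1,2)] f g] show ?thesis by (simp add: comp_def)
qed

lemma exp_neg_inverse_le_half:
  fixes \<beta> :: real
  assumes "\<beta> > 0" and "exp (1 / \<beta>) = 2 + 1 / \<beta>"
  shows "exp (- 1 / \<beta>) \<le> 1 / 2"
proof -
  have "2 \<le> exp (1 / \<beta>)" using assms by simp
  then have "inverse (exp (1 / \<beta>)) \<le> inverse 2" by (intro le_imp_inverse_le) auto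
  then show ?thesis by (simp add: exp_minus[symmetric])
qed

locale posted_price_market =
  fixes n :: nat and F :: "nat \<Rightarrow> (real \<Rightarrow> real) measure"
    and ystar :: "nat \<Rightarrow> (real \<Rightarrow> real) \<Rightarrow> real \<Rightarrow> real" and pos :: "nat \<Rightarrow> nat" and p :: real
  assumes prob_F: "\<And>i. i < n \<Longrightarrow> prob_space (F i)"
    and eval_measurable: "\<And>i z. i < n \<Longrightarrow> (\<lambda>v. v z) \<in> borel_measurable (F i)"
    and valuation_AE: "\<And>i. i < n \<Longrightarrow> (AE v in F i. valuation v)"
    and demand_measurable: "\<And>i. i < n \<Longrightarrow> (\<lambda>v. ystar i v p) \<in> borel_measurable (F i)"
    and demand_max_AE: "\<And>i. i < n \<Longrightarrow> (AE v in F i.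
          ystar i v p \<in> {0..1} \<and> (\<forall>z\<in>{0..1}. v z - p * z \<le> v (ystar i v p) - p * ystar i v p))"
    and price_pos: "p > 0"
    and integrable_SW: "integrable (PiM {..<n} F) (\<lambda>vs. SW n ystar pos vs p)"
    and integrable_SWopt: "integrable (PiM {..<n} F) (SWopt n)"
    and integrable_sold: "integrable (PiM {..<n} F) (\<lambda>vs. \<Sum>i<n. ybuy n ystar pos vs p i)"
begin

abbreviation profiles :: "(nat \<Rightarrow> real \<Rightarrow> real) measure" where
  "profiles \<equiv> PiM {..<n} F"

abbreviation expected_sold :: real where
  "expected_sold \<equiv> \<integral>vs. (\<Sum>i<n. ybuy n ystar pos vs p i) \<partial>profiles"

abbreviation expected_max_utility :: "nat \<Rightarrow> real" where
  "expected_max_utility i \<equiv> \<integral>vs. max_utility p (vs i) \<partial>profiles"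

sublocale P: prob_space profiles
  by (rule prob_space_PiM) (use prob_F in auto)

lemma AE_best_response_profile: "AE vs in profiles. best_response_profile n ystar p vs"
proof -
  define good where "good i v \<longleftrightarrow> valuation v \<and> ystar i v p \<in> {0..1}
      \<and> (\<forall>z\<in>{0..1}. v z - p * z \<le> v (ystar i v p) - p * ystar i v p)" for i v
  have "AE v in F i. good i v" if "i < n" for i
    using valuation_AE[OF that] demand_max_AE[OF that] by eventually_elim (simp add: good_def)
  then have "AE vs in profiles. \<forall>i\<in>{..<n}. good i (vs i)"
    using AE_PiM_component[of "{..<n}" F _ "good _"] prob_F by (intro AE_finite_allI) auto
  then show ?thesis
    by eventually_elim (use price_pos in \<open>auto simp: best_response_profile_def good_def\<close>)
qed

lemma measurable_max_utility_component:
  assumes "i \<in> A" "A \<subseteq> {..<n}"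
  shows "(\<lambda>vs. max_utility p (vs i)) \<in> borel_measurable (PiM A F)"
  using assms eval_measurable
  by (intro measurable_compose[OF measurable_component_singleton borel_measurable_max_utility]) auto

lemma measurable_supply_left:
  assumes "before n pos i \<subseteq> A" "A \<subseteq> {..<n}"
  shows "supply_left n ystar pos p i \<in> borel_measurable (PiM A F)"
proof -
  have "(\<lambda>vs. ystar j (vs j) p) \<in> borel_measurable (PiM A F)" if "j \<in> before n pos i" for j
    using that assms demand_measurable
    by (intro measurable_compose[OF measurable_component_singleton]) auto
  then show ?thesis
    unfolding supply_left_def[abs_def] demand_before_def by measurable
qed

text \<open>The supply left for agent \<open>i\<close> depends only on the valuations of earlier agents.\<close>

lemma indep_supply_left_max_utility:
  assumes i: "i < n"
  shows "P.indep_var borel (supply_left n ystar pos p i) borel (\<lambda>vs. max_utility p (vs i))"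
proof -
  have "P.indep_var borel (\<lambda>vs. supply_left n ystar pos p i (restrict vs (before n pos i)))
      borel (\<lambda>vs. max_utility p (restrict vs {i} i))"
    using i before_subset[of n pos i]
    by (intro indep_var_PiM_disjoint_coordinates prob_F measurable_supply_left
        measurable_max_utility_component[of i "{i}"]) auto
  moreover have "supply_left n ystar pos p i (restrict vs (before n pos i)) = supply_left n ystar pos p i vs" for vs
    by (simp add: supply_left_def demand_before_def cong: sum.cong)
  ultimately show ?thesis by simp
qed

lemma integrable_supply_left: "integrable profiles (supply_left n ystar pos p i)"
  using measurable_supply_left[OF before_subset subset_refl]
  by (intro P.integrable_const_bound[where B=1]) (auto simp: supply_left_def)

lemma integrable_max_utility:
  assumes i: "i < n"
  shows "integrable profiles (\<lambda>vs. max_utility p (vs i))"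
proof (rule Bochner_Integration.integrable_bound[OF integrable_SWopt])
  show "(\<lambda>vs. max_utility p (vs i)) \<in> borel_measurable profiles"
    using i by (intro measurable_max_utility_component) auto
  show "AE vs in profiles. norm (max_utility p (vs i)) \<le> norm (SWopt n vs)"
    using AE_best_response_profile by eventually_elim
      (use i best_response_profile.max_utility_nonneg best_response_profile.max_utility_le_SWopt in force)
qed

lemma expected_supply_left_ge:
  assumes i: "i < n"
  shows "1 - expected_sold \<le> (\<integral>vs. supply_left n ystar pos p i vs \<partial>profiles)"
proof -
  have "(\<integral>vs. 1 - (\<Sum>j<n. ybuy n ystar pos vs p j) \<partial>profiles) \<le> (\<integral>vs. supply_left n ystar pos p i vs \<partial>profiles)"
    using AE_best_response_profile integrable_sold integrable_supply_left
    by (intro integral_mono_AE) (auto intro: best_response_profile.unsold_le_supply_left[OF _ i])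
  then show ?thesis using integrable_sold by (simp add: P.prob_space)
qed

lemma expected_welfare_ge:
  "p * expected_sold + (1 - expected_sold) * (\<Sum>i<n. expected_max_utility i)
     \<le> (\<integral>vs. SW n ystar pos vs p \<partial>profiles)"
proof -
  let ?r = "supply_left n ystar pos p" and ?u = "\<lambda>i vs. max_utility p (vs i)"
  let ?sold = "\<lambda>vs. \<Sum>i<n. ybuy n ystar pos vs p i"
  have integrable_ru: "integrable profiles (\<lambda>vs. ?r i vs * ?u i vs)" if "i < n" for i
    using that by (intro P.indep_var_integrable indep_supply_left_max_utility
        integrable_supply_left integrable_max_utility)
  have "(1 - expected_sold) * (\<Sum>i<n. expected_max_utility i)
      \<le> (\<Sum>i<n. (\<integral>vs. ?r i vs \<partial>profiles) * expected_max_utility i)"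
    unfolding sum_distrib_left using expected_supply_left_ge AE_best_response_profile
    by (intro sum_mono mult_right_mono integral_nonneg_AE)
      (auto intro: best_response_profile.max_utility_nonneg)
  also have "\<dots> = (\<Sum>i<n. \<integral>vs. ?r i vs * ?u i vs \<partial>profiles)"
    by (intro sum.cong refl P.indep_var_lebesgue_integral[symmetric] indep_supply_left_max_utility
        integrable_supply_left integrable_max_utility) auto
  also have "\<dots> = (\<integral>vs. (\<Sum>i<n. ?r i vs * ?u i vs) \<partial>profiles)"
    by (rule Bochner_Integration.integral_sum[symmetric]) (use integrable_ru in simp)
  finally have "p * expected_sold + (1 - expected_sold) * (\<Sum>i<n. expected_max_utility i)
      \<le> (\<integral>vs. p * ?sold vs \<partial>profiles) + (\<integral>vs. (\<Sum>i<n. ?r i vs * ?u i vs) \<partial>profiles)"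
    by simp
  also have "\<dots> = (\<integral>vs. p * ?sold vs + (\<Sum>i<n. ?r i vs * ?u i vs) \<partial>profiles)"
    using integrable_sold integrable_ru by (intro Bochner_Integration.integral_add[symmetric]) auto
  also have "\<dots> \<le> (\<integral>vs. SW n ystar pos vs p \<partial>profiles)"
  proof (rule integral_mono_AE[OF _ integrable_SW])
    show "integrable profiles (\<lambda>vs. p * ?sold vs + (\<Sum>i<n. ?r i vs * ?u i vs))"
      using integrable_sold integrable_ru by (intro Bochner_Integration.integrable_add integrable_sum) auto
  qed (use AE_best_response_profile in \<open>auto intro: best_response_profile.SW_ge\<close>)
  finally show ?thesis .
qed

lemma expected_SWopt_le:
  assumes "0 < n"
  shows "(\<integral>vs. SWopt n vs \<partial>profiles) \<le> p + (\<Sum>i<n. expected_max_utility i)"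
proof -
  have "integrable profiles (\<lambda>vs. p + (\<Sum>i<n. max_utility p (vs i)))"
    using integrable_max_utility by (intro Bochner_Integration.integrable_add integrable_sum) auto
  then have "(\<integral>vs. SWopt n vs \<partial>profiles) \<le> (\<integral>vs. p + (\<Sum>i<n. max_utility p (vs i)) \<partial>profiles)"
    using AE_best_response_profile integrable_SWopt
    by (intro integral_mono_AE) (auto intro: best_response_profile.SWopt_le[OF _ assms])
  also have "\<dots> = p + (\<integral>vs. (\<Sum>i<n. max_utility p (vs i)) \<partial>profiles)"
    using integrable_max_utility
    by (subst Bochner_Integration.integral_add) (auto intro: integrable_sum simp: P.prob_space)
  also have "\<dots> = p + (\<Sum>i<n. expected_max_utility i)"
    using integrable_max_utility by (subst Bochner_Integration.integral_sum) auto
  finally show ?thesis .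
qed

theorem expected_welfare_ge_sold_times_opt:
  assumes "expected_sold \<le> 1 / 2"
  shows "expected_sold * (\<integral>vs. SWopt n vs \<partial>profiles) \<le> (\<integral>vs. SW n ystar pos vs p \<partial>profiles)"
proof (cases "n = 0")
  case True
  then show ?thesis by (simp add: SW_def)
next
  case False
  let ?X = "\<Sum>i<n. expected_max_utility i"
  have sold_nonneg: "0 \<le> expected_sold"
    using AE_best_response_profile by (intro integral_nonneg_AE) (auto intro: best_response_profile.sold_nonneg)
  have "0 \<le> ?X"
    using AE_best_response_profile
    by (intro sum_nonneg integral_nonneg_AE) (auto intro: best_response_profile.max_utility_nonneg)
  then have "?X * expected_sold \<le> ?X * (1 / 2)"
    using assms by (intro mult_left_mono)
  then have mix: "expected_sold * (p + ?X) \<le> p * expected_sold + (1 - expected_sold) * ?X"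
    by (simp add: algebra_simps)
  have "expected_sold * (\<integral>vs. SWopt n vs \<partial>profiles) \<le> expected_sold * (p + ?X)"
    using expected_SWopt_le False sold_nonneg by (intro mult_left_mono) auto
  also have "\<dots> \<le> p * expected_sold + (1 - expected_sold) * ?X" by (rule mix)
  also have "\<dots> \<le> (\<integral>vs. SW n ystar pos vs p \<partial>profiles)" by (rule expected_welfare_ge)
  finally show ?thesis .
qed

end

theorem mainTheorem2:
  fixes n :: nat
    and F :: "nat \<Rightarrow> (real \<Rightarrow> real) measure"
    and ystar :: "nat \<Rightarrow> (real \<Rightarrow> real) \<Rightarrow> real \<Rightarrow> real"
    and pos :: "nat \<Rightarrow> nat"
    and p \<beta> :: real
  assumes beta_pos: "\<beta> > 0"
    and beta_eq: "exp (1 / \<beta>) = 2 + 1 / \<beta>"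
    and prob: "\<And>i. i < n \<Longrightarrow> prob_space (F i)"
    and eval_meas: "\<And>i z. i < n \<Longrightarrow> (\<lambda>v. v z) \<in> borel_measurable (F i)"
    and val_AE: "\<And>i. i < n \<Longrightarrow> (AE v in F i. valuation v)"
    and ystar_meas: "\<And>i. i < n \<Longrightarrow> (\<lambda>v. ystar i v p) \<in> borel_measurable (F i)"
    and ystar_max: "\<And>i. i < n \<Longrightarrow> (AE v in F i.
           ystar i v p \<in> {0..1} \<and> (\<forall>z\<in>{0..1}. v z - p * z \<le> v (ystar i v p) - p * ystar i v p))"
    and ordering: "bij_betw pos {..<n} {..<n}"
    and p_pos: "p > 0"
    and int_SW: "integrable (PiM {..<n} F) (\<lambda>vs. SW n ystar pos vs p)"
    and int_SWopt: "integrable (PiM {..<n} F) (\<lambda>vs. SWopt n vs)"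
    and int_y: "integrable (PiM {..<n} F) (\<lambda>vs. \<Sum>i<n. ybuy n ystar pos vs p i)"
    and expected_sold: "(\<integral>vs. (\<Sum>i<n. ybuy n ystar pos vs p i) \<partial>PiM {..<n} F) = exp (- 1 / \<beta>)"
  shows "(\<integral>vs. SW n ystar pos vs p \<partial>PiM {..<n} F)
           \<ge> exp (- 1 / \<beta>) * (\<integral>vs. SWopt n vs \<partial>PiM {..<n} F)"
proof -
  interpret posted_price_market n F ystar pos p
    by (rule posted_price_market.intro) (fact prob eval_meas val_AE ystar_meas ystar_max p_pos int_SW int_SWopt int_y)+
  show ?thesis
    using expected_welfare_ge_sold_times_opt[unfolded expected_sold]
      exp_neg_inverse_le_half[OF beta_pos beta_eq] by blast
qed

end
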